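(* For each positive integer $n\ge 4$, there exists a pair of sidigraphs $S,S'$ of order $n$, both strongly connected and both non cycle balanced, which are noncospectral and satisfy $E(S)=E(S')$.
   Context: A sidigraph is a digraph (no loops, at most one arc from $u$ to $v$) with a sign $\pm1$ on each arc; its eigenvalues are those of its adjacency matrix, whose $(i,j)$ entry is the sign of the arc from $v_i$ to $v_j$ if it exists and $0$ otherwise; its spectrum is the multiset of eigenvalues, and two sidigraphs are cospectral if their spectra coincide. A sidigraph is strongly connected if its underlying digraph is. The sign of a directed cycle is the product of its arc signs; a sidigraph is cycle balanced if every directed cycle is positive, non cycle balanced otherwise. The energy of a sidigraph with eigenvalues $z_1,\dots,z_n$ is $E(S)=\sum_{j=1}^n|\Re z_j|$. *)

theory Defs
  imports Complex_Main "Jordan_Normal_Form.Char_Poly"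
begin

text \<open>Entry (i,j) is the sign of the arc from i to j, or 0 if there is no arc.\<close>

definition sidigraph :: "nat \<Rightarrow> int mat \<Rightarrow> bool" where
  "sidigraph n A \<longleftrightarrow> A \<in> carrier_mat n n \<and>
     (\<forall>i<n. \<forall>j<n. A $$ (i,j) \<in> {-1, 0, 1}) \<and> (\<forall>i<n. A $$ (i,i) = 0)"

definition arcs :: "int mat \<Rightarrow> (nat \<times> nat) set" where
  "arcs A = {(i,j). i < dim_row A \<and> j < dim_row A \<and> A $$ (i,j) \<noteq> 0}"

definition strongly_connected :: "int mat \<Rightarrow> bool" where
  "strongly_connected A \<longleftrightarrow> (\<forall>i < dim_row A. \<forall>j < dim_row A. (i,j) \<in> (arcs A)\<^sup>*)"

definition dcycle :: "int mat \<Rightarrow> nat list \<Rightarrow> bool" where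
  "dcycle A vs \<longleftrightarrow> length vs \<ge> 2 \<and> distinct vs \<and>
     (\<forall>i < length vs. (vs ! i, vs ! ((i + 1) mod length vs)) \<in> arcs A)"

definition cycle_sign :: "int mat \<Rightarrow> nat list \<Rightarrow> int" where
  "cycle_sign A vs = (\<Prod>i < length vs. A $$ (vs ! i, vs ! ((i + 1) mod length vs)))"

definition cycle_balanced :: "int mat \<Rightarrow> bool" where
  "cycle_balanced A \<longleftrightarrow> (\<forall>vs. dcycle A vs \<longrightarrow> cycle_sign A vs > 0)"

definition spectrum_sd :: "int mat \<Rightarrow> complex multiset" where
  "spectrum_sd A = proots (char_poly (map_mat of_int A :: complex mat))"

definition cospectral :: "int mat \<Rightarrow> int mat \<Rightarrow> bool" where
  "cospectral A B \<longleftrightarrow> spectrum_sd A = spectrum_sd B"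

definition energy :: "int mat \<Rightarrow> real" where
  "energy A = sum_mset (image_mset (\<lambda>z. \<bar>Re z\<bar>) (spectrum_sd A))"

end

theory Submission
  imports Defs
begin

text \<open>Take for \<open>S'\<close> the negation \<open>-S\<close> of a sidigraph \<open>S\<close>. The spectrum of \<open>-S\<close> is the
  negated spectrum of \<open>S\<close>, so the two energies agree, while negation changes neither the
  underlying digraph nor the sign of an even cycle. It remains to choose \<open>S\<close> strongly connected,
  with a negative 2-cycle, and with a spectrum that is not symmetric about 0. The directed
  \<open>n\<close>-cycle with an extra negative arc \<open>1 \<rightarrow> 0\<close> and an extra positive arc \<open>1 \<rightarrow> 3\<close> does it:
  all its row sums are 1, so 1 is an eigenvalue, whereas the eigenvector equations for \<open>-1\<close>
  force the eigenvector to vanish.\<close>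

lemma proots_prod_linear_factors:
  "proots (\<Prod>a\<leftarrow>as. [:- a, 1:]) = mset (as :: 'a :: idom list)"
proof (induction as)
  case (Cons a as)
  have "proots ([:- a, 1:] * (\<Prod>a\<leftarrow>as. [:- a, 1:])) = {#a#} + mset as"
    by (subst proots_mult) (auto simp: prod_list_zero_iff Cons.IH)
  then show ?case by simp
qed simp

lemma poly_char_poly_uminus:
  assumes B: "(B :: 'a :: field mat) \<in> carrier_mat n n"
  shows "poly (char_poly (- B)) x = (-1) ^ n * poly (char_poly B) (- x)"
proof -
  have "- char_matrix (- B) x = char_matrix B (- x)"
    using B by (intro eq_matI) (auto simp: char_matrix_def)
  then have "poly (char_poly (- B)) x = det (char_matrix B (- x))"
    using char_poly_matrix[of "- B" n] B by simp
  also have "\<dots> = (-1) ^ n * det (- char_matrix B (- x))"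
  proof -
    have "char_matrix B (- x) \<in> carrier_mat n n" using B by (simp add: char_matrix_def)
    moreover have "- char_matrix B (- x) = (-1) \<cdot>\<^sub>m char_matrix B (- x)"
      by (intro eq_matI) auto
    ultimately show ?thesis by (simp add: det_smult flip: power_mult_distrib)
  qed
  finally show ?thesis using char_poly_matrix[OF B] by simp
qed

lemma char_poly_uminus_factorized:
  assumes B: "(B :: complex mat) \<in> carrier_mat n n"
    and factorized: "char_poly B = (\<Prod>a\<leftarrow>as. [:- a, 1:])" and len: "length as = n"
  shows "char_poly (- B) = (\<Prod>a\<leftarrow>map uminus as. [:- a, 1:])"
proof (rule poly_eq_poly_eq_iff[THEN iffD1], rule ext)
  fix x
  have "poly (char_poly (- B)) x = (-1) ^ length as * (\<Prod>a\<leftarrow>as. - a - x)"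
    by (simp add: poly_char_poly_uminus[OF B] factorized len poly_prod_list o_def)
  also have "\<dots> = (\<Prod>a\<leftarrow>as. x + a)"
    by (induction as) (auto simp: algebra_simps)
  also have "\<dots> = poly (\<Prod>a\<leftarrow>map uminus as. [:- a, 1:]) x"
    by (simp add: poly_prod_list o_def add.commute)
  finally show "poly (char_poly (- B)) x = poly (\<Prod>a\<leftarrow>map uminus as. [:- a, 1:]) x" .
qed

lemma spectrum_sd_uminus:
  assumes A: "A \<in> carrier_mat n n"
  shows "spectrum_sd (- A) = image_mset uminus (spectrum_sd A)"
proof -
  let ?B = "map_mat of_int A :: complex mat"
  have B: "?B \<in> carrier_mat n n" using A by simp
  have "map_mat of_int (- A) = - ?B" using A by (intro eq_matI) auto
  moreover obtain as where as: "char_poly ?B = (\<Prod>a\<leftarrow>as. [:- a, 1:])" "length as = n"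
    using char_poly_factorized[OF B] by blast
  ultimately have "spectrum_sd (- A) = proots (\<Prod>a\<leftarrow>map uminus as. [:- a, 1:])"
    by (simp add: spectrum_sd_def char_poly_uminus_factorized[OF B] del: map_map)
  also have "\<dots> = image_mset uminus (spectrum_sd A)"
    unfolding proots_prod_linear_factors by (simp add: spectrum_sd_def as proots_prod_linear_factors)
  finally show ?thesis .
qed

lemma energy_uminus:
  assumes "A \<in> carrier_mat n n"
  shows "energy (- A) = energy A"
  by (simp add: energy_def spectrum_sd_uminus[OF assms] multiset.map_comp o_def)

lemma mem_spectrum_sd_iff_eigenvalue:
  assumes A: "A \<in> carrier_mat n n"
  shows "z \<in># spectrum_sd A \<longleftrightarrow> eigenvalue (map_mat of_int A :: complex mat) z"
proof -
  let ?B = "map_mat of_int A :: complex mat"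
  have B: "?B \<in> carrier_mat n n" using A by simp
  have "char_poly ?B \<noteq> 0" using degree_monic_char_poly[OF B] by auto
  then show ?thesis by (simp add: spectrum_sd_def eigenvalue_root_char_poly[OF B])
qed

lemma not_cospectral_uminus:
  assumes A: "A \<in> carrier_mat n n"
    and "z \<in># spectrum_sd A" and "- z \<notin># spectrum_sd A"
  shows "\<not> cospectral A (- A)"
proof
  assume "cospectral A (- A)"
  then have "z \<in># image_mset uminus (spectrum_sd A)"
    using assms(2) by (simp add: cospectral_def spectrum_sd_uminus[OF A])
  then show False using assms(3) by auto
qed

lemma sidigraph_uminus: "sidigraph n A \<Longrightarrow> sidigraph n (- A)"
  unfolding sidigraph_def by force

lemma arcs_uminus: "A \<in> carrier_mat n n \<Longrightarrow> arcs (- A) = arcs A"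
  by (auto simp: arcs_def)

lemma strongly_connected_uminus:
  "A \<in> carrier_mat n n \<Longrightarrow> strongly_connected (- A) \<longleftrightarrow> strongly_connected A"
  by (simp add: strongly_connected_def arcs_uminus)

lemma dcycle_uminus: "A \<in> carrier_mat n n \<Longrightarrow> dcycle (- A) vs \<longleftrightarrow> dcycle A vs"
  by (simp add: dcycle_def arcs_uminus)

lemma cycle_sign_uminus:
  assumes A: "A \<in> carrier_mat n n" and "dcycle A vs"
  shows "cycle_sign (- A) vs = (-1) ^ length vs * cycle_sign A vs"
proof -
  let ?e = "\<lambda>i. (vs ! i, vs ! ((i + 1) mod length vs))"
  have "cycle_sign (- A) vs = (\<Prod>i < length vs. - 1 * A $$ ?e i)"
    unfolding cycle_sign_def using assms by (intro prod.cong) (auto simp: dcycle_def arcs_def)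
  also have "\<dots> = (-1) ^ length vs * cycle_sign A vs"
    unfolding cycle_sign_def prod.distrib by simp
  finally show ?thesis .
qed

lemma not_cycle_balanced_uminus_if_negative_even_cycle:
  assumes A: "A \<in> carrier_mat n n" and cycle: "dcycle A vs"
    and "even (length vs)" and "cycle_sign A vs < 0"
  shows "\<not> cycle_balanced A" and "\<not> cycle_balanced (- A)"
  using assms cycle_sign_uminus[OF A cycle] dcycle_uminus[OF A]
  by (auto simp: cycle_balanced_def)

lemma strongly_connected_if_hamiltonian_cycle:
  assumes dim: "dim_row A = n" and step: "\<And>i. i < n \<Longrightarrow> (i, Suc i mod n) \<in> arcs A"
  shows "strongly_connected A"
  unfolding strongly_connected_def dim
proof (intro allI impI)
  fix i j assume i: "i < n" and j: "j < n"
  have "(i, (i + k) mod n) \<in> (arcs A)\<^sup>*" for k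
  proof (induction k)
    case (Suc k)
    have "((i + k) mod n, Suc ((i + k) mod n) mod n) \<in> arcs A"
      using i by (intro step) simp
    then show ?case using Suc.IH by (simp add: mod_Suc_eq rtrancl.rtrancl_into_rtrancl)
  qed (simp add: i)
  from this[of "j + n - i"] show "(i, j) \<in> (arcs A)\<^sup>*"
    using i j by simp
qed

definition chorded_cycle :: "nat \<Rightarrow> int mat" where
  "chorded_cycle n = mat n n (\<lambda>(i, j).
     (if j = Suc i mod n then 1 else 0) +
     (if (i, j) = (1, 3) then 1 else if (i, j) = (1, 0) then -1 else 0))"

lemma dim_chorded_cycle [simp]:
  "dim_row (chorded_cycle n) = n" "dim_col (chorded_cycle n) = n"
  by (simp_all add: chorded_cycle_def)

lemma chorded_cycle_carrier [simp]: "chorded_cycle n \<in> carrier_mat n n"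
  by (simp add: carrier_matI)

lemma index_chorded_cycle:
  "i < n \<Longrightarrow> j < n \<Longrightarrow> chorded_cycle n $$ (i, j) =
     (if j = Suc i mod n then 1 else 0) +
     (if (i, j) = (1, 3) then 1 else if (i, j) = (1, 0) then -1 else 0)"
  by (simp add: chorded_cycle_def)

lemma chorded_cycle_succ:
  assumes "n \<ge> 4" and "i < n"
  shows "chorded_cycle n $$ (i, Suc i mod n) = 1"
  using assms by (auto simp: index_chorded_cycle)

lemma sidigraph_chorded_cycle:
  assumes "n \<ge> 4" shows "sidigraph n (chorded_cycle n)"
proof -
  have "chorded_cycle n $$ (i, i) = 0" if "i < n" for i
    using assms that by (cases "Suc i = n") (auto simp: index_chorded_cycle)
  then show ?thesis
    using assms by (auto simp: sidigraph_def index_chorded_cycle)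
qed

lemma strongly_connected_chorded_cycle:
  assumes "n \<ge> 4" shows "strongly_connected (chorded_cycle n)"
  using assms chorded_cycle_succ
  by (intro strongly_connected_if_hamiltonian_cycle) (auto simp: arcs_def)

lemma chorded_cycle_negative_digon:
  assumes "n \<ge> 4"
  shows "dcycle (chorded_cycle n) [0, 1]" and "cycle_sign (chorded_cycle n) [0, 1] = -1"
  using assms
  by (auto simp: dcycle_def cycle_sign_def arcs_def index_chorded_cycle less_Suc_eq
      lessThan_Suc numeral_2_eq_2)

lemma chorded_cycle_mult_vec:
  fixes v :: "'a :: comm_ring_1 vec"
  assumes n: "n \<ge> 4" and i: "i < n" and v: "v \<in> carrier_vec n"
  shows "(map_mat of_int (chorded_cycle n) *\<^sub>v v) $ i =
     v $ (Suc i mod n) + (if i = 1 then v $ 3 - v $ 0 else 0)"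
proof -
  have "(map_mat of_int (chorded_cycle n) *\<^sub>v v) $ i =
      (\<Sum>j<n. of_int (chorded_cycle n $$ (i, j)) * v $ j)"
    using i v by (simp add: scalar_prod_def lessThan_atLeast0)
  also have "\<dots> = (\<Sum>j<n. (if j = Suc i mod n then v $ j else 0) +
      (if i = 1 \<and> j = 3 then v $ j else 0) - (if i = 1 \<and> j = 0 then v $ j else 0))"
    using i by (intro sum.cong) (auto simp: index_chorded_cycle)
  also have "\<dots> = v $ (Suc i mod n) + (if i = 1 then v $ 3 - v $ 0 else 0)"
    using n by (simp add: sum.distrib sum_subtractf sum.delta')
  finally show ?thesis .
qed

lemma eigenvalue_chorded_cycle_one:
  assumes n: "n \<ge> 4"
  shows "eigenvalue (map_mat of_int (chorded_cycle n) :: complex mat) 1"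
proof -
  let ?ones = "vec n (\<lambda>_. 1) :: complex vec"
  have "map_mat of_int (chorded_cycle n) *\<^sub>v ?ones = 1 \<cdot>\<^sub>v ?ones"
    using n by (intro eq_vecI) (simp_all add: chorded_cycle_mult_vec del: index_mult_mat_vec)
  moreover have "?ones $ 0 \<noteq> 0\<^sub>v n $ 0"
    using n by simp
  ultimately show ?thesis
    unfolding eigenvalue_def eigenvector_def by (intro exI[of _ ?ones]) auto
qed

lemma chorded_cycle_minus_one_eigenvector_vanishes:
  fixes v :: "complex vec"
  assumes n: "n \<ge> 4" and v: "v \<in> carrier_vec n"
    and eigen: "map_mat of_int (chorded_cycle n) *\<^sub>v v = (- 1) \<cdot>\<^sub>v v"
    and k: "k < n"
  shows "v $ k = 0"
proof -
  have E: "v $ (Suc i mod n) + (if i = 1 then v $ 3 - v $ 0 else 0) = - v $ i" if "i < n" for i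
    using arg_cong[OF eigen, of "\<lambda>w. w $ i"] chorded_cycle_mult_vec[OF n that v] that v by simp
  have "v $ 1 = - v $ 0" and "v $ 3 - v $ 0 + v $ 2 = - v $ 1" and "v $ 3 = - v $ 2"
    using E[of 0] E[of 1] E[of 2] n by (simp_all add: numeral_3_eq_3 numeral_2_eq_2)
  then have v0: "v $ 0 = 0" and v1: "v $ 1 = 0" by (simp_all add: algebra_simps)
  \<comment> \<open>every other row says \<open>v\<^sub>i\<^sub>+\<^sub>1 = -v\<^sub>i\<close>, so \<open>v\<^sub>0 = 0\<close> propagates backwards around the cycle\<close>
  have "v $ (n - 1 - d) = 0" if "d \<le> n - 3" for d
    using that
  proof (induction d)
    case 0
    show ?case using E[of "n - 1"] n v0 by (simp split: if_splits)
  next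
    case (Suc d)
    have "Suc (n - 1 - Suc d) mod n = n - 1 - d" "n - 1 - Suc d \<noteq> 1"
      using Suc.prems n by auto
    then show ?case using E[of "n - 1 - Suc d"] Suc n by simp
  qed
  from this[of "n - 1 - k"] show ?thesis
    using v0 v1 k by (cases "k \<le> 1") (auto simp: le_Suc_eq)
qed

lemma not_eigenvalue_chorded_cycle_minus_one:
  assumes n: "n \<ge> 4"
  shows "\<not> eigenvalue (map_mat of_int (chorded_cycle n) :: complex mat) (- 1)"
proof
  assume "eigenvalue (map_mat of_int (chorded_cycle n) :: complex mat) (- 1)"
  then obtain v :: "complex vec" where v: "v \<in> carrier_vec n" "v \<noteq> 0\<^sub>v n"
    and eigen: "map_mat of_int (chorded_cycle n) *\<^sub>v v = (- 1) \<cdot>\<^sub>v v"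
    unfolding eigenvalue_def eigenvector_def by auto
  have "v = 0\<^sub>v n"
    using chorded_cycle_minus_one_eigenvector_vanishes[OF n v(1) eigen] v(1) by (intro eq_vecI) auto
  with v(2) show False ..
qed

theorem theorem4p1:
  fixes n :: nat
  assumes "n \<ge> 4"
  shows "\<exists>S S'. sidigraph n S \<and> sidigraph n S' \<and>
           strongly_connected S \<and> strongly_connected S' \<and>
           \<not> cycle_balanced S \<and> \<not> cycle_balanced S' \<and>
           \<not> cospectral S S' \<and> energy S = energy S'"
proof -
  let ?S = "chorded_cycle n"
  have S: "?S \<in> carrier_mat n n" by simp
  have "sidigraph n ?S" and "strongly_connected ?S"
    using assms by (simp_all add: sidigraph_chorded_cycle strongly_connected_chorded_cycle)
  moreover have "\<not> cycle_balanced ?S" and "\<not> cycle_balanced (- ?S)"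
    using not_cycle_balanced_uminus_if_negative_even_cycle[OF S chorded_cycle_negative_digon(1)[OF assms]]
      chorded_cycle_negative_digon(2)[OF assms]
    by simp_all
  moreover have "\<not> cospectral ?S (- ?S)"
  proof (rule not_cospectral_uminus[OF S])
    show "1 \<in># spectrum_sd ?S" and "- 1 \<notin># spectrum_sd ?S"
      unfolding mem_spectrum_sd_iff_eigenvalue[OF S]
      using eigenvalue_chorded_cycle_one not_eigenvalue_chorded_cycle_minus_one assms by auto
  qed
  ultimately show ?thesis
    by (intro exI[of _ ?S] exI[of _ "- ?S"])
      (simp add: sidigraph_uminus strongly_connected_uminus[OF S] energy_uminus[OF S])
qed

end
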